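(* Let $d\ge3$ and let $\mathcal{F}_d$ be the family of all polytopes $P(V)=\mathrm{conv}(V)$ with $V\subseteq\{0,1\}^d$ such that: (a) $\{0,1\}^{d-1}\times\{0\}\subseteq V$; (b) $e_d\in V$ and $\mathbf{1}\in V$; (c) $e_d+e_1\notin V$ and $\mathbf{1}-e_1\notin V$. Then $\mathcal{F}_d$ consists of $2^{2^{d-1}-4}$ different full-dimensional $0/1$-polytopes in $[0,1]^d$; any two polytopes in $\mathcal{F}_d$ are $0/1$-equivalent if and only if they are combinatorially equivalent; and for $d\ge6$, $\mathcal{F}_d$ contains more than $2^{2^{d-2}}$ pairwise combinatorially non-equivalent $d$-dimensional $0/1$-polytopes.
   Context: $e_i$ denotes the $i$-th unit vector and $\mathbf{1}$ the all-ones vector in $\mathbb{R}^d$. Two $0/1$-polytopes are $0/1$-equivalent if one is mapped onto the other by a symmetry of the cube $[0,1]^d$ (generated by coordinate permutations and switching maps $x_i\mapsto 1-x_i$). Two polytopes are combinatorially equivalent if their face lattices are isomorphic. *)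

theory Defs
  imports "HOL-Analysis.Analysis"
begin

text \<open>Points of R^d are vectors real^'n with d = CARD('n). The coordinate type is
  linearly ordered so that the first coordinate (index 1) is Min UNIV and the
  last coordinate (index d) is Max UNIV.\<close>

definition first_coord :: "'n::{finite,linorder}" where
  "first_coord = Min UNIV"

definition last_coord :: "'n::{finite,linorder}" where
  "last_coord = Max UNIV"

definition cube01 :: "(real^'n) set" where
  "cube01 = {x. \<forall>i. x $ i = 0 \<or> x $ i = 1}"

definition Fd_vertex_sets :: "(real^'n::{finite,linorder}) set set" where
  "Fd_vertex_sets = {V. V \<subseteq> cube01
      \<and> {x \<in> cube01. x $ last_coord = 0} \<subseteq> V
      \<and> axis last_coord 1 \<in> V \<and> vec 1 \<in> V
      \<and> axis last_coord 1 + axis first_coord 1 \<notin> V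
      \<and> vec 1 - axis first_coord 1 \<notin> V}"

definition Fd :: "(real^'n::{finite,linorder}) set set" where
  "Fd = (\<lambda>V. convex hull V) ` Fd_vertex_sets"

definition coord_perm_map :: "('n \<Rightarrow> 'n) \<Rightarrow> real^'n \<Rightarrow> real^'n" where
  "coord_perm_map \<sigma> x = (\<chi> i. x $ \<sigma> i)"

definition switch_map :: "'n \<Rightarrow> real^'n \<Rightarrow> real^'n" where
  "switch_map j x = (\<chi> i. if i = j then 1 - x $ i else x $ i)"

inductive_set cube_syms :: "(real^'n \<Rightarrow> real^'n) set" where
  id_sym: "id \<in> cube_syms"
| perm_sym: "\<sigma> permutes UNIV \<Longrightarrow> g \<in> cube_syms \<Longrightarrow> coord_perm_map \<sigma> \<circ> g \<in> cube_syms"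
| switch_sym: "g \<in> cube_syms \<Longrightarrow> switch_map j \<circ> g \<in> cube_syms"

definition zo_equivalent :: "(real^'n) set \<Rightarrow> (real^'n) set \<Rightarrow> bool" where
  "zo_equivalent P Q \<longleftrightarrow> (\<exists>g \<in> cube_syms. g ` P = Q)"

definition comb_equivalent :: "('a::real_vector) set \<Rightarrow> ('b::real_vector) set \<Rightarrow> bool" where
  "comb_equivalent P Q \<longleftrightarrow> (\<exists>f. bij_betw f {F. F face_of P} {G. G face_of Q}
      \<and> (\<forall>F1 \<in> {F. F face_of P}. \<forall>F2 \<in> {F. F face_of P}. F1 \<subseteq> F2 \<longleftrightarrow> f F1 \<subseteq> f F2))"

end

theory Submission
  imports Defs
begin

text \<open>
  Every point of {0,1}^d is an extreme point of any subset of [0,1]^d containing it, so P(V)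
  determines V, and the members of F_d correspond to the free choices of the 2^(d-1) - 4
  remaining top vertices. As V contains 0 and every e_i, P(V) is full-dimensional, and cube
  symmetries, being affine bijections, preserve face lattices.

  Conversely, the base P(V) \<inter> {x_d = 0} is the only proper face with 2^(d-1) vertices: if the
  normal of a face has a nonzero i-th entry (i < d), switching x_i moves every vertex of the face
  off it, so the face contains at most half of each layer {x_d = c}, and equality is ruled out by
  the missing vertices e_d + e_1 and 1 - e_1. Hence a face lattice isomorphism fixes the base,
  maps its facets {x_d = 0, x_i = c} to facets of the same kind, and therefore also the faces
  {x_i = c}; so the induced bijection of vertices permutes and switches coordinates, i.e. it is a
  cube symmetry.

  A cube symmetry between two members of F_d must fix the last coordinate without switching it,
  so each combinatorial class lies in one orbit of a group of order (d-1)! 2^(d-1), and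
  (d-1)! 2^(d-1) 2^(2^(d-2)) < 2^(2^(d-1) - 4) for d \<ge> 6.
\<close>

section \<open>Faces of polytopes\<close>

lemma face_of_convex_hull_eq_hull_Int:
  fixes V :: "'a::euclidean_space set"
  assumes "compact V" "F face_of convex hull V"
  shows "F = convex hull (F \<inter> V)"
proof
  obtain S where S: "S \<subseteq> V" "F = convex hull S"
    by (rule face_of_convex_hull_subset[OF assms])
  have "S \<subseteq> F"
    unfolding S(2) by (rule hull_subset)
  with S(1) have "S \<subseteq> F \<inter> V"
    by (rule Int_greatest[rotated])
  then show "F \<subseteq> convex hull (F \<inter> V)"
    unfolding S(2) by (rule hull_mono)
  show "convex hull (F \<inter> V) \<subseteq> F"
    using face_of_imp_convex[OF assms(2)] by (simp add: hull_minimal)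
qed

lemma face_of_polytope_exposed:
  fixes P :: "'a::euclidean_space set"
  assumes "polytope P" "F face_of P"
  obtains a b where "\<forall>x \<in> P. a \<bullet> x \<le> b" "F = P \<inter> {x. a \<bullet> x = b}"
proof -
  have "F exposed_face_of P"
    using assms by (simp add: exposed_face_of_polyhedron polytope_imp_polyhedron)
  then show ?thesis
    using that unfolding exposed_face_of_def by blast
qed

lemma nonempty_face_has_extreme_point:
  fixes S :: "'a::euclidean_space set"
  assumes "F face_of S" "compact S" "convex S" "F \<noteq> {}"
  obtains v where "v extreme_point_of S" "v \<in> F"
proof -
  have "compact F" "convex F"
    using face_of_imp_compact[OF assms(3,2,1)] face_of_imp_convex[OF assms(1)] .
  then obtain v where "v extreme_point_of F"
    using extreme_point_exists_convex assms(4) by blast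
  then show ?thesis
    using that extreme_point_of_face[OF assms(1)] by blast
qed

locale face_lattice_iso =
  fixes P Q :: "'a::euclidean_space set" and f :: "'a set \<Rightarrow> 'a set"
  assumes compact_P: "compact P" and convex_P: "convex P"
    and compact_Q: "compact Q" and convex_Q: "convex Q"
    and bij_faces: "bij_betw f {F. F face_of P} {G. G face_of Q}"
    and subset_iff_image: "F1 face_of P \<Longrightarrow> F2 face_of P \<Longrightarrow> F1 \<subseteq> F2 \<longleftrightarrow> f F1 \<subseteq> f F2"
begin

lemma face_of_image: "F face_of P \<Longrightarrow> f F face_of Q"
  using bij_betwE[OF bij_faces] by blast

lemma obtain_preimage:
  assumes "G face_of Q"
  obtains F where "F face_of P" "f F = G"
proof -
  have "G \<in> f ` {F. F face_of P}"
    using assms bij_faces by (simp add: bij_betw_def)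
  then show ?thesis
    using that by blast
qed

lemma eq_iff: "F1 face_of P \<Longrightarrow> F2 face_of P \<Longrightarrow> f F1 = f F2 \<longleftrightarrow> F1 = F2"
  using bij_betw_imp_inj_on[OF bij_faces] by (auto simp: inj_on_def)

lemma image_empty: "f {} = {}"
proof -
  obtain F where F: "F face_of P" "f F = {}"
    using obtain_preimage[OF empty_face_of] .
  then show ?thesis
    using subset_iff_image[OF empty_face_of F(1)] by simp
qed

lemma image_top: "f P = Q"
proof -
  have P: "P face_of P"
    using convex_P by (rule face_of_refl)
  obtain F where F: "F face_of P" "f F = Q"
    using obtain_preimage[OF face_of_refl[OF convex_Q]] .
  have "Q \<subseteq> f P"
    using subset_iff_image[OF F(1) P] face_of_imp_subset[OF F(1)] F(2) by simp
  moreover have "f P \<subseteq> Q"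
    using face_of_image[OF P] by (rule face_of_imp_subset)
  ultimately show ?thesis
    by blast
qed

lemma image_singleton_ex:
  assumes "v extreme_point_of P"
  shows "\<exists>w. w extreme_point_of Q \<and> f {v} = {w}"
proof -
  have v: "{v} face_of P"
    using assms by (simp add: face_of_singleton)
  have "f {v} \<noteq> f {}"
    using eq_iff[OF v empty_face_of] by simp
  then have "f {v} \<noteq> {}"
    by (simp add: image_empty)
  then obtain w where w: "w extreme_point_of Q" "w \<in> f {v}"
    using nonempty_face_has_extreme_point[OF face_of_image[OF v] compact_Q convex_Q] by blast
  have "{w} face_of Q"
    using w(1) by (simp add: face_of_singleton)
  then obtain F where F: "F face_of P" "f F = {w}"
    by (rule obtain_preimage)
  have "F \<subseteq> {v}"
    using subset_iff_image[OF F(1) v] F(2) w(2) by simp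
  moreover have "F \<noteq> {}"
    using F(2) image_empty by (metis insert_not_empty)
  ultimately have "F = {v}"
    by blast
  then show ?thesis
    using F(2) w(1) by auto
qed

definition vertex_map :: "'a \<Rightarrow> 'a" where
  "vertex_map v = (THE w. f {v} = {w})"

lemma image_singleton:
  assumes "v extreme_point_of P"
  shows "f {v} = {vertex_map v}" and "vertex_map v extreme_point_of Q"
proof -
  obtain w where "w extreme_point_of Q" "f {v} = {w}"
    using image_singleton_ex[OF assms] by blast
  moreover have "vertex_map v = w"
    unfolding vertex_map_def using \<open>f {v} = {w}\<close> by simp
  ultimately show "f {v} = {vertex_map v}" "vertex_map v extreme_point_of Q"
    by simp_all
qed

lemma vertex_map_mem_iff:
  assumes "F face_of P" "v extreme_point_of P"
  shows "vertex_map v \<in> f F \<longleftrightarrow> v \<in> F"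
proof -
  have "{v} face_of P"
    using assms(2) by (simp add: face_of_singleton)
  from subset_iff_image[OF this assms(1)] show ?thesis
    by (simp add: image_singleton(1)[OF assms(2)])
qed

lemma bij_betw_vertex_map:
  "bij_betw vertex_map {v. v extreme_point_of P} {w. w extreme_point_of Q}"
proof (rule bij_betw_imageI)
  show "inj_on vertex_map {v. v extreme_point_of P}"
  proof (rule inj_onI)
    fix v v' assume v: "v \<in> {v. v extreme_point_of P}" "v' \<in> {v. v extreme_point_of P}"
      and "vertex_map v = vertex_map v'"
    then have "f {v} = f {v'}"
      by (simp add: image_singleton(1))
    with v have "{v} = {v'}"
      by (simp add: eq_iff face_of_singleton)
    then show "v = v'"
      by simp
  qed
  show "vertex_map ` {v. v extreme_point_of P} = {w. w extreme_point_of Q}"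
  proof (intro equalityI subsetI)
    fix w assume "w \<in> {w. w extreme_point_of Q}"
    then have "{w} face_of Q"
      by (simp add: face_of_singleton)
    then obtain F where F: "F face_of P" "f F = {w}"
      by (rule obtain_preimage)
    moreover have "F \<noteq> {}"
      using F(2) image_empty by (metis insert_not_empty)
    ultimately obtain v where v: "v extreme_point_of P" "v \<in> F"
      using nonempty_face_has_extreme_point[OF F(1) compact_P convex_P] by blast
    then have "vertex_map v = w"
      using vertex_map_mem_iff[OF F(1) v(1)] F(2) by simp
    with v(1) show "w \<in> vertex_map ` {v. v extreme_point_of P}"
      by blast
  qed (auto intro: image_singleton(2))
qed

lemma card_extreme_points_image:
  assumes "F face_of P"
  shows "card {w \<in> f F. w extreme_point_of Q} = card {v \<in> F. v extreme_point_of P}"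
proof -
  have "{w \<in> f F. w extreme_point_of Q} = vertex_map ` {v \<in> F. v extreme_point_of P}"
  proof (intro equalityI subsetI)
    fix w assume w: "w \<in> {w \<in> f F. w extreme_point_of Q}"
    then obtain v where "v extreme_point_of P" "w = vertex_map v"
      using bij_betw_imp_surj_on[OF bij_betw_vertex_map] by blast
    with w show "w \<in> vertex_map ` {v \<in> F. v extreme_point_of P}"
      using vertex_map_mem_iff[OF assms] by blast
  next
    fix w assume "w \<in> vertex_map ` {v \<in> F. v extreme_point_of P}"
    then obtain v where "v \<in> F" "v extreme_point_of P" "w = vertex_map v"
      by blast
    then show "w \<in> {w \<in> f F. w extreme_point_of Q}"
      using vertex_map_mem_iff[OF assms] image_singleton(2) by simp
  qed
  moreover have "inj_on vertex_map {v \<in> F. v extreme_point_of P}"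
    using bij_betw_imp_inj_on[OF bij_betw_vertex_map] by (rule inj_on_subset) blast
  ultimately show ?thesis
    by (simp add: card_image)
qed

end

section \<open>Points of the 0/1-cube\<close>

definition vec_of_set :: "'n set \<Rightarrow> real^'n" where
  "vec_of_set S = (\<chi> k. if k \<in> S then 1 else 0)"

lemma vec_of_set_nth [simp]: "vec_of_set S $ k = (if k \<in> S then 1 else 0)"
  by (simp add: vec_of_set_def)

lemma vec_of_set_eq_iff [simp]: "vec_of_set S = vec_of_set T \<longleftrightarrow> S = T"
  by (auto simp: vec_eq_iff split: if_splits)

lemma vec_of_set_in_cube01 [simp]: "vec_of_set S \<in> cube01"
  by (simp add: cube01_def)

lemma vec_of_set_empty [simp]: "vec_of_set {} = 0"
  by (simp add: vec_eq_iff)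

lemma inner_vec_of_set: "a \<bullet> vec_of_set S = (\<Sum>k\<in>S. a $ k)"
  by (simp add: inner_vec_def if_distrib sum.If_cases)

lemma cube01_eq_range_vec_of_set: "cube01 = range vec_of_set"
proof -
  have "x = vec_of_set {i. x $ i = 1}" if "x \<in> cube01" for x
    using that by (auto simp: cube01_def vec_eq_iff)
  then show ?thesis
    by (auto simp: cube01_def)
qed

lemma finite_cube01 [simp]: "finite (cube01 :: (real^'n) set)"
  by (simp add: cube01_eq_range_vec_of_set)

lemma card_cube01: "card (cube01 :: (real^'n) set) = 2 ^ CARD('n)"
proof -
  have "card (cube01 :: (real^'n) set) = card (Pow (UNIV :: 'n set))"
    unfolding cube01_eq_range_vec_of_set Pow_UNIV
    by (rule card_image) (auto simp: inj_on_def vec_eq_iff split: if_splits)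
  then show ?thesis
    by (simp add: card_Pow)
qed

lemma cube01_coord: "x \<in> cube01 \<Longrightarrow> x $ i = 0 \<or> x $ i = 1"
  by (simp add: cube01_def)

lemma cube01_subset_cbox: "cube01 \<subseteq> cbox 0 1"
  by (auto simp: cube01_def mem_box_cart) (metis order.refl zero_le_one)+

lemma convex_combination_01_eq:
  fixes a b u :: real
  assumes "0 \<le> a" "a \<le> 1" "0 \<le> b" "b \<le> 1" "0 < u" "u < 1"
    and "(1 - u) * a + u * b = 0 \<or> (1 - u) * a + u * b = 1"
  shows "a = b"
proof -
  have "0 \<le> (1 - u) * a" "0 \<le> u * b" "0 \<le> (1 - u) * (1 - a)" "0 \<le> u * (1 - b)"
    using assms(1-6) by simp_all
  moreover have "(1 - u) * (1 - a) + u * (1 - b) = 1 - ((1 - u) * a + u * b)"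
    by (simp add: algebra_simps)
  ultimately have "(1 - u) * a = 0 \<and> u * b = 0 \<or> (1 - u) * (1 - a) = 0 \<and> u * (1 - b) = 0"
    using assms(7) by linarith
  then show ?thesis
    using assms(5,6) by auto
qed

lemma cube01_extreme_point:
  assumes "R \<subseteq> cbox 0 1" "v \<in> cube01" "v \<in> R"
  shows "v extreme_point_of R"
  unfolding extreme_point_of_def
proof (intro conjI ballI notI)
  fix a b assume ab: "a \<in> R" "b \<in> R" and "v \<in> open_segment a b"
  then obtain u where "a \<noteq> b" "0 < u" "u < 1" and v: "v = (1 - u) *\<^sub>R a + u *\<^sub>R b"
    by (auto simp: in_segment)
  have "a \<in> cbox 0 1" "b \<in> cbox 0 1"
    using ab assms(1) by auto
  then have "a $ i = b $ i" for i
    using cube01_coord[OF assms(2), of i] \<open>0 < u\<close> \<open>u < 1\<close>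
    by (intro convex_combination_01_eq[of _ _ u]) (simp_all add: mem_box_cart, simp_all add: v)
  with \<open>a \<noteq> b\<close> show False
    by (simp add: vec_eq_iff)
qed (rule assms(3))

lemma extreme_point_of_convex_hull_cube01:
  assumes "V \<subseteq> cube01"
  shows "v extreme_point_of convex hull V \<longleftrightarrow> v \<in> V"
proof
  have "convex hull V \<subseteq> cbox 0 1"
    by (rule hull_minimal) (use assms cube01_subset_cbox in auto)
  then show "v \<in> V \<Longrightarrow> v extreme_point_of convex hull V"
    using assms by (intro cube01_extreme_point) (auto intro: hull_inc)
qed (rule extreme_point_of_convex_hull)

lemma inj_on_convex_hull_cube01:
  "inj_on (\<lambda>V. convex hull V) {V. V \<subseteq> cube01}"
  by (rule inj_onI) (metis (no_types) mem_Collect_eq subsetI extreme_point_of_convex_hull_cube01 subset_antisym)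

lemma face_of_coord_hyperplane:
  fixes S :: "(real^'n) set"
  assumes "convex S" "S \<subseteq> cbox 0 1" "c = 0 \<or> c = 1"
  shows "S \<inter> {x. x $ i = c} face_of S"
proof -
  have box: "0 \<le> x $ i \<and> x $ i \<le> 1" if "x \<in> S" for x
    using subsetD[OF assms(2) that] by (simp add: mem_box_cart)
  have "S \<inter> {x. ((2 * c - 1) *\<^sub>R axis i 1) \<bullet> x = c} face_of S"
  proof (rule face_of_Int_supporting_hyperplane_le[OF assms(1)])
    fix x assume "x \<in> S"
    then show "((2 * c - 1) *\<^sub>R axis i 1) \<bullet> x \<le> c"
      using box assms(3) by (auto simp: inner_axis')
  qed
  moreover have "{x. ((2 * c - 1) *\<^sub>R axis i 1) \<bullet> x = c} = {x. x $ i = c}"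
    using assms(3) by (auto simp: inner_axis')
  ultimately show ?thesis
    by simp
qed

lemma convex_coord_hyperplane: "convex {x :: real^'n. x $ i = c}"
  using convex_hyperplane[of "axis i (1::real)" c] by (simp add: inner_axis')

lemma inner_vec_eq_sum_support:
  assumes "\<And>k. k \<notin> K \<Longrightarrow> a $ k = 0"
  shows "a \<bullet> x = (\<Sum>k\<in>K. a $ k * x $ k)"
proof -
  have "a \<bullet> x = (\<Sum>k\<in>UNIV. a $ k * x $ k)"
    by (simp add: inner_vec_def)
  also have "\<dots> = (\<Sum>k\<in>K. a $ k * x $ k)"
    by (rule sum.mono_neutral_right) (auto simp: assms)
  finally show ?thesis .
qed

lemma inner_const_on_subcube:
  fixes a :: "real^'n"
  assumes "i \<noteq> l" "c = 0 \<or> c = 1"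
    and const: "\<And>u. u \<in> cube01 \<Longrightarrow> u $ l = 0 \<Longrightarrow> u $ i = c \<Longrightarrow> a \<bullet> u = b"
  shows "a \<bullet> x = a $ i * x $ i + a $ l * x $ l" and "b = a $ i * c"
proof -
  define S0 where "S0 = (if c = 1 then {i} else {})"
  have S0: "a \<bullet> vec_of_set S = b" if "l \<notin> S" "i \<in> S \<longleftrightarrow> i \<in> S0" for S
    using const[of "vec_of_set S"] that assms(1,2) by (auto simp: S0_def)
  have "a $ j = 0" if "j \<notin> {i, l}" for j
  proof -
    have "a \<bullet> vec_of_set (insert j S0) = b" "a \<bullet> vec_of_set S0 = b"
      using that assms(1) by (intro S0; auto simp: S0_def)+
    then show ?thesis
      using that by (simp add: inner_vec_of_set S0_def split: if_splits)
  qed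
  then show "a \<bullet> x = a $ i * x $ i + a $ l * x $ l"
    using inner_vec_eq_sum_support[of "{i, l}" a x] assms(1) by simp
  have "a \<bullet> vec_of_set S0 = b"
    using assms(1) by (intro S0) (auto simp: S0_def)
  then show "b = a $ i * c"
    using assms(2) by (auto simp: inner_vec_of_set S0_def)
qed

lemma inner_vec_of_set_two_coords:
  fixes a :: "real^'n"
  assumes "\<And>x. a \<bullet> x = a $ i * x $ i + a $ l * x $ l"
  shows "a \<bullet> vec_of_set S = (if i \<in> S then a $ i else 0) + (if l \<in> S then a $ l else 0)"
  by (subst assms) simp

lemma switch_map_nth [simp]: "switch_map j x $ k = (if k = j then 1 - x $ k else x $ k)"
  by (simp add: switch_map_def)

lemma switch_map_switch_map [simp]: "switch_map j (switch_map j x) = x"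
  by (simp add: vec_eq_iff)

lemma inj_switch_map: "inj (switch_map j)"
  by (metis injI switch_map_switch_map)

lemma switch_map_in_cube01: "x \<in> cube01 \<Longrightarrow> switch_map j x \<in> cube01"
  by (auto simp: cube01_def)

lemma inner_switch_map: "a \<bullet> switch_map j x = a \<bullet> x + (1 - 2 * x $ j) * a $ j"
proof -
  have "switch_map j x = x + (1 - 2 * x $ j) *\<^sub>R axis j 1"
    by (auto simp: vec_eq_iff switch_map_def axis_def)
  then show ?thesis
    by (simp add: inner_add_right inner_axis)
qed

section \<open>Symmetries of the cube\<close>

definition cube_map :: "('n \<Rightarrow> 'n) \<Rightarrow> 'n set \<Rightarrow> real^'n \<Rightarrow> real^'n" where
  "cube_map p S x = (\<chi> k. if k \<in> S then 1 - x $ p k else x $ p k)"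

lemma cube_map_nth [simp]: "cube_map p S x $ k = (if k \<in> S then 1 - x $ p k else x $ p k)"
  by (simp add: cube_map_def)

lemma cube_map_in_cube_syms:
  assumes "p permutes UNIV"
  shows "cube_map p S \<in> cube_syms"
proof -
  have "finite S"
    by simp
  then show ?thesis
  proof (induction S rule: finite_induct)
    case empty
    have "cube_map p {} = coord_perm_map p \<circ> id"
      by (simp add: fun_eq_iff vec_eq_iff coord_perm_map_def)
    then show ?case
      using cube_syms.perm_sym[OF assms cube_syms.id_sym] by simp
  next
    case (insert j S)
    have "cube_map p (insert j S) = switch_map j \<circ> cube_map p S"
      using insert.hyps(2) by (auto simp: fun_eq_iff vec_eq_iff switch_map_def)
    then show ?case
      using cube_syms.switch_sym[OF insert.IH] by (simp only:)
  qed
qed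

lemma cube_syms_eq_cube_map:
  assumes "g \<in> cube_syms"
  obtains p S where "p permutes UNIV" "g = cube_map p S"
proof -
  have "\<exists>p S. p permutes UNIV \<and> g = cube_map p S"
    using assms
  proof (induction rule: cube_syms.induct)
    case id_sym
    have "id = cube_map id {}"
      by (simp add: fun_eq_iff vec_eq_iff)
    then show ?case
      using permutes_id by blast
  next
    case (perm_sym \<sigma> g)
    then obtain p S where p: "p permutes UNIV" and g: "g = cube_map p S"
      by blast
    have "coord_perm_map \<sigma> \<circ> g = cube_map (p \<circ> \<sigma>) (\<sigma> -` S)"
      by (simp add: g fun_eq_iff vec_eq_iff coord_perm_map_def)
    then show ?case
      using permutes_compose[OF perm_sym.hyps(1) p] by blast
  next
    case (switch_sym g j)
    then obtain p S where p: "p permutes UNIV" and g: "g = cube_map p S"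
      by blast
    have "switch_map j \<circ> g = cube_map p (if j \<in> S then S - {j} else insert j S)"
      by (auto simp: g fun_eq_iff vec_eq_iff switch_map_def)
    then show ?case
      using p by blast
  qed
  then show ?thesis
    using that by blast
qed

lemma cube_map_in_cube01:
  assumes "x \<in> cube01"
  shows "cube_map p S x \<in> cube01"
proof -
  have "x $ p k = 0 \<or> x $ p k = 1" for k
    using assms by (rule cube01_coord)
  then show ?thesis
    by (auto simp: cube01_def)
qed

lemma cube_map_affine:
  fixes p :: "'n::finite \<Rightarrow> 'n"
  assumes "p permutes UNIV"
  obtains L where "linear L" "inj L" "cube_map p S = (\<lambda>x. vec_of_set S + L x)"
proof -
  define L where "L x = (\<chi> k. (if k \<in> S then -1 else 1) * x $ p k)" for x :: "real^'n"
  have "linear L"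
    by (rule linearI) (simp_all add: L_def vec_eq_iff algebra_simps)
  moreover have "inj L"
  proof (rule injI)
    fix x y assume "L x = L y"
    then have "x $ p k = y $ p k" for k
      by (auto simp: L_def vec_eq_iff split: if_splits)
    then show "x = y"
      using permutes_surj[OF assms] by (metis surjD vec_eq_iff)
  qed
  moreover have "cube_map p S = (\<lambda>x. vec_of_set S + L x)"
    by (simp add: fun_eq_iff vec_eq_iff L_def)
  ultimately show ?thesis
    using that by blast
qed

lemma cube_sym_affine:
  assumes "g \<in> cube_syms"
  obtains c L where "linear L" "inj L" "g = (\<lambda>x. c + L x)"
  by (metis assms cube_map_affine cube_syms_eq_cube_map)

lemma inj_cube_sym:
  assumes "g \<in> cube_syms"
  shows "inj g"
proof -
  obtain c L where "inj L" "g = (\<lambda>x. c + L x)"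
    using cube_sym_affine[OF assms] by metis
  then show ?thesis
    by (simp add: inj_def)
qed

lemma cube_sym_convex_hull:
  assumes "g \<in> cube_syms"
  shows "g ` (convex hull A) = convex hull (g ` A)"
proof -
  obtain c L where "linear L" "g = (\<lambda>x. c + L x)"
    using cube_sym_affine[OF assms] by metis
  then show ?thesis
    by (simp add: image_image[symmetric] convex_hull_linear_image convex_hull_translation)
qed

lemma face_of_cube_sym_image_iff:
  assumes "g \<in> cube_syms"
  shows "g ` F face_of g ` S \<longleftrightarrow> F face_of S"
proof -
  obtain c L where "linear L" "inj L" "g = (\<lambda>x. c + L x)"
    using cube_sym_affine[OF assms] by metis
  then show ?thesis
    using face_of_translation_eq[of c "L ` F" "L ` S"] face_of_linear_image[of L F S]
    by (simp add: image_image[symmetric])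
qed

lemma cube_sym_permuting_coords:
  assumes "\<pi> permutes UNIV"
  obtains g where "g \<in> cube_syms" "\<forall>x k. g x $ \<pi> k = (if k \<in> T then 1 - x $ k else x $ k)"
proof
  show "cube_map (inv \<pi>) (\<pi> ` T) \<in> cube_syms"
    using assms by (intro cube_map_in_cube_syms permutes_inv)
  show "\<forall>x k. cube_map (inv \<pi>) (\<pi> ` T) x $ \<pi> k = (if k \<in> T then 1 - x $ k else x $ k)"
    using permutes_inj[OF assms] by (simp add: inj_image_mem_iff permutes_inverses(2)[OF assms])
qed

lemma comb_equivalent_refl: "comb_equivalent P P"
  unfolding comb_equivalent_def by (rule exI[of _ id]) simp

lemma comb_equivalent_sym:
  assumes "comb_equivalent P Q"
  shows "comb_equivalent Q P"
proof -
  obtain f where f: "bij_betw f {F. F face_of P} {G. G face_of Q}"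
    and mono: "\<forall>F1 \<in> {F. F face_of P}. \<forall>F2 \<in> {F. F face_of P}. F1 \<subseteq> F2 \<longleftrightarrow> f F1 \<subseteq> f F2"
    using assms unfolding comb_equivalent_def by blast
  define g where "g = inv_into {F. F face_of P} f"
  have g: "bij_betw g {G. G face_of Q} {F. F face_of P}"
    unfolding g_def by (rule bij_betw_inv_into[OF f])
  have "G1 \<subseteq> G2 \<longleftrightarrow> g G1 \<subseteq> g G2" if "G1 face_of Q" "G2 face_of Q" for G1 G2
    using that mono bij_betwE[OF g] bij_betw_inv_into_right[OF f] by (metis g_def mem_Collect_eq)
  with g show ?thesis
    unfolding comb_equivalent_def by blast
qed

lemma comb_equivalent_cube_sym_image:
  assumes "g \<in> cube_syms"
  shows "comb_equivalent P (g ` P)"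
proof -
  have inj: "inj g"
    using assms by (rule inj_cube_sym)
  have "bij_betw (image g) {F. F face_of P} {G. G face_of g ` P}"
  proof (rule bij_betwI')
    show "g ` F1 = g ` F2 \<longleftrightarrow> F1 = F2" for F1 F2
      using inj by (simp add: inj_image_eq_iff)
    show "g ` F \<in> {G. G face_of g ` P}" if "F \<in> {F. F face_of P}" for F
      using that face_of_cube_sym_image_iff[OF assms] by simp
    show "\<exists>F \<in> {F. F face_of P}. G = g ` F" if "G \<in> {G. G face_of g ` P}" for G
    proof
      have "G \<subseteq> g ` P"
        using that face_of_imp_subset by blast
      then show "G = g ` (P \<inter> g -` G)"
        by blast
      then show "P \<inter> g -` G \<in> {F. F face_of P}"
        using that face_of_cube_sym_image_iff[OF assms] by (metis mem_Collect_eq)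
    qed
  qed
  then show ?thesis
    unfolding comb_equivalent_def using inj by (intro exI[of _ "image g"]) (simp add: inj_image_subset_iff)
qed

section \<open>The family \<open>\<F>\<^sub>d\<close>\<close>

lemma first_coord_ne_last_coord:
  assumes "CARD('n::{finite,linorder}) \<ge> 2"
  shows "(first_coord :: 'n::{finite,linorder}) \<noteq> last_coord"
proof
  assume eq: "(first_coord :: 'n) = last_coord"
  have "x = first_coord" for x :: 'n
  proof (rule antisym)
    show "first_coord \<le> x"
      by (simp add: first_coord_def)
    show "x \<le> first_coord"
      unfolding eq by (simp add: last_coord_def)
  qed
  then have "(UNIV :: 'n set) = {first_coord}"
    by auto
  then have "CARD('n) = card {first_coord :: 'n}"
    by (rule arg_cong[where f = card])
  with assms show False
    by simp
qed

lemma ex_coord_ne_first_last: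
  assumes "CARD('n::{finite,linorder}) \<ge> 3"
  obtains k where "k \<noteq> (first_coord :: 'n::{finite,linorder})" "k \<noteq> last_coord"
proof -
  have "card {first_coord :: 'n, last_coord} \<le> 2"
    by (simp add: card_insert_if)
  with assms have "{first_coord :: 'n, last_coord} \<noteq> UNIV"
    by auto
  then show ?thesis
    using that by blast
qed

definition cube_layer :: "real \<Rightarrow> (real^'n::{finite,linorder}) set" where
  "cube_layer c = {x \<in> cube01. x $ last_coord = c}"

lemma vec_of_set_in_cube_layer [simp]:
  "vec_of_set S \<in> cube_layer 0 \<longleftrightarrow> last_coord \<notin> S"
  "vec_of_set S \<in> cube_layer 1 \<longleftrightarrow> last_coord \<in> S"
  by (simp_all add: cube_layer_def)

lemma cube01_eq_layers: "cube01 = cube_layer 0 \<union> cube_layer 1"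
  using cube01_coord by (auto simp: cube_layer_def)

lemma finite_cube_layer [simp]: "finite (cube_layer c)"
  unfolding cube_layer_def by (rule finite_subset[OF _ finite_cube01]) blast

lemma card_cube_layer_0:
  "card (cube_layer 0 :: (real^'n::{finite,linorder}) set) = 2 ^ (CARD('n::{finite,linorder}) - 1)"
proof -
  have "cube_layer 0 = vec_of_set ` Pow (UNIV - {last_coord :: 'n})"
  proof (intro equalityI subsetI)
    fix x assume "x \<in> cube_layer 0"
    then obtain S where "x = vec_of_set S"
      by (auto simp: cube_layer_def cube01_eq_range_vec_of_set)
    with \<open>x \<in> cube_layer 0\<close> show "x \<in> vec_of_set ` Pow (UNIV - {last_coord})"
      by auto
  qed auto
  then have "card (cube_layer 0 :: (real, 'n) vec set) = card (Pow (UNIV - {last_coord :: 'n}))"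
    by (simp add: card_image inj_on_def)
  then show ?thesis
    by (simp add: card_Pow card_Diff_singleton)
qed

lemma card_cube_layer_1:
  "card (cube_layer 1 :: (real^'n::{finite,linorder}) set) = card (cube_layer 0 :: (real^'n::{finite,linorder}) set)"
proof -
  have "cube_layer 1 = switch_map last_coord ` (cube_layer 0 :: (real, 'n) vec set)"
  proof (intro equalityI subsetI)
    fix x assume "x \<in> cube_layer 1"
    then have "switch_map last_coord x \<in> cube_layer 0"
      by (simp add: cube_layer_def switch_map_in_cube01)
    then show "x \<in> switch_map last_coord ` cube_layer 0"
      by (metis image_eqI switch_map_switch_map)
  qed (auto simp: cube_layer_def switch_map_in_cube01)
  also have "card \<dots> = card (cube_layer 0 :: (real, 'n) vec set)"
    by (rule card_image[OF inj_on_subset[OF inj_switch_map subset_UNIV]])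
  finally show ?thesis .
qed

lemma Fd_vertex_sets_eq:
  assumes "CARD('n::{finite,linorder}) \<ge> 2"
  shows "(Fd_vertex_sets :: (real^'n::{finite,linorder}) set set) =
    {V. cube_layer 0 \<union> {vec_of_set {last_coord}, vec_of_set UNIV} \<subseteq> V \<and>
        V \<subseteq> cube01 - {vec_of_set {last_coord, first_coord}, vec_of_set (- {first_coord})}}"
proof -
  have fl: "(first_coord :: 'n) \<noteq> last_coord"
    using assms by (rule first_coord_ne_last_coord)
  have "axis last_coord 1 = (vec_of_set {last_coord} :: (real, 'n) vec)"
    by (simp add: vec_eq_iff axis_def)
  moreover have "vec 1 = (vec_of_set UNIV :: (real, 'n) vec)"
    by (simp add: vec_eq_iff)
  moreover have "axis last_coord 1 + axis first_coord 1 = (vec_of_set {last_coord, first_coord} :: (real, 'n) vec)"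
    using fl by (simp add: vec_eq_iff axis_def)
  moreover have "vec 1 - axis first_coord 1 = (vec_of_set (- {first_coord}) :: (real, 'n) vec)"
    by (simp add: vec_eq_iff axis_def)
  ultimately show ?thesis
    unfolding Fd_vertex_sets_def cube_layer_def by (intro Collect_cong) auto
qed

lemma card_disjoint_inj_image:
  assumes "inj s" "finite Y" "X \<subseteq> Y" "s ` X \<subseteq> Y" "X \<inter> s ` X = {}"
  shows "2 * card X \<le> card Y" and "2 * card X = card Y \<Longrightarrow> Y = X \<union> s ` X"
proof -
  have "finite X"
    using assms(2,3) by (rule finite_subset[rotated])
  then have card: "card (X \<union> s ` X) = 2 * card X"
    using assms(1,5) by (simp add: card_Un_disjoint card_image inj_on_subset)
  have sub: "X \<union> s ` X \<subseteq> Y"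
    using assms(3,4) by blast
  show "2 * card X \<le> card Y"
    using card_mono[OF assms(2) sub] card by simp
  show "Y = X \<union> s ` X" if "2 * card X = card Y"
    using card_subset_eq[OF assms(2) sub] card that by simp
qed

lemma card_sets_between:
  assumes "finite U" "A \<subseteq> U"
  shows "card {V. A \<subseteq> V \<and> V \<subseteq> U} = 2 ^ (card U - card A)"
proof -
  have "{V. A \<subseteq> V \<and> V \<subseteq> U} = (\<union>) A ` Pow (U - A)"
  proof (intro equalityI subsetI)
    fix V assume "V \<in> {V. A \<subseteq> V \<and> V \<subseteq> U}"
    then have "V = A \<union> (V - A)" "V - A \<in> Pow (U - A)"
      by auto
    then show "V \<in> (\<union>) A ` Pow (U - A)"
      by (rule image_eqI)
  qed (use assms(2) in auto)
  moreover have "inj_on ((\<union>) A) (Pow (U - A))"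
  proof (rule inj_onI)
    fix X Y assume "X \<in> Pow (U - A)" "Y \<in> Pow (U - A)" "A \<union> X = A \<union> Y"
    then have "X = (A \<union> X) - A" "Y = (A \<union> Y) - A"
      by auto
    with \<open>A \<union> X = A \<union> Y\<close> show "X = Y"
      by simp
  qed
  ultimately have "card {V. A \<subseteq> V \<and> V \<subseteq> U} = 2 ^ card (U - A)"
    using assms(1) by (simp add: card_image card_Pow)
  then show ?thesis
    using assms by (simp add: card_Diff_subset finite_subset)
qed

lemma card_Fd_vertex_sets:
  assumes "CARD('n::{finite,linorder}) \<ge> 3"
  shows "card (Fd_vertex_sets :: (real^'n::{finite,linorder}) set set) = 2 ^ (2 ^ (CARD('n::{finite,linorder}) - 1) - 4)"
proof -
  let ?l = "last_coord :: 'n" and ?f = "first_coord :: 'n"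
  define A where "A = cube_layer 0 \<union> {vec_of_set {?l}, vec_of_set UNIV}"
  define U where "U = cube01 - {vec_of_set {?l, ?f}, vec_of_set (- {?f})}"
  have fl: "?f \<noteq> ?l"
    using assms by (intro first_coord_ne_last_coord) simp
  obtain k :: 'n where k: "k \<noteq> ?f" "k \<noteq> ?l"
    using ex_coord_ne_first_last[OF assms] .
  have ne: "{?l} \<noteq> - {?f}" "UNIV \<noteq> {?l, ?f}" "{?l} \<noteq> UNIV" "UNIV \<noteq> - {?f}" "{?l, ?f} \<noteq> - {?f}"
    using k by auto
  have "vec_of_set {?l, ?f} \<notin> cube_layer 0" "vec_of_set (- {?f}) \<notin> cube_layer 0"
    using fl by simp_all
  then have "A \<subseteq> U"
    using ne fl by (auto simp: A_def U_def cube01_eq_layers)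
  have "card A = 2 ^ (CARD('n) - 1) + 2"
    unfolding A_def using ne by (subst card_Un_disjoint) (simp_all add: card_cube_layer_0)
  moreover have "card U = 2 ^ CARD('n) - 2"
    unfolding U_def using ne fl by (subst card_Diff_subset) (simp_all add: card_cube01)
  moreover have "CARD('n) = Suc (CARD('n) - 1)"
    using assms by simp
  then have "(2::nat) ^ CARD('n) = 2 * 2 ^ (CARD('n) - 1)"
    by (metis power_Suc)
  ultimately have "card U - card A = 2 ^ (CARD('n) - 1) - 4"
    by simp
  moreover have "Fd_vertex_sets = {V. A \<subseteq> V \<and> V \<subseteq> U}"
    unfolding A_def U_def using assms by (intro Fd_vertex_sets_eq) simp
  ultimately show ?thesis
    using card_sets_between[OF _ \<open>A \<subseteq> U\<close>] by (simp add: U_def)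
qed

lemma card_Fd:
  assumes "CARD('n::{finite,linorder}) \<ge> 3"
  shows "card (Fd :: (real^'n::{finite,linorder}) set set) = 2 ^ (2 ^ (CARD('n::{finite,linorder}) - 1) - 4)"
proof -
  have "inj_on (\<lambda>V. convex hull V) (Fd_vertex_sets :: (real, 'n) vec set set)"
    using inj_on_convex_hull_cube01 by (rule inj_on_subset) (auto simp: Fd_vertex_sets_def)
  then show ?thesis
    using card_Fd_vertex_sets[OF assms] by (simp add: Fd_def card_image)
qed

section \<open>Faces of a polytope in \<open>\<F>\<^sub>d\<close>\<close>

locale Fd_member =
  fixes V :: "(real^'n::{finite,linorder}) set"
  assumes card_ge_3: "CARD('n) \<ge> 3" and mem_Fd_vertex_sets: "V \<in> Fd_vertex_sets"
begin

abbreviation PV :: "(real, 'n) vec set" where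
  "PV \<equiv> convex hull V"

lemma first_ne_last: "(first_coord :: 'n) \<noteq> last_coord"
  using card_ge_3 by (intro first_coord_ne_last_coord) simp

lemma V_conditions:
  "cube_layer 0 \<subseteq> V" "vec_of_set {last_coord} \<in> V" "vec_of_set UNIV \<in> V"
  "V \<subseteq> cube01" "vec_of_set {last_coord, first_coord} \<notin> V" "vec_of_set (- {first_coord}) \<notin> V"
proof -
  have "CARD('n) \<ge> 2"
    using card_ge_3 by simp
  then show "cube_layer 0 \<subseteq> V" "vec_of_set {last_coord} \<in> V" "vec_of_set UNIV \<in> V"
    "V \<subseteq> cube01" "vec_of_set {last_coord, first_coord} \<notin> V" "vec_of_set (- {first_coord}) \<notin> V"
    using mem_Fd_vertex_sets Fd_vertex_sets_eq by auto
qed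

lemmas cube_layer_0_subset_V = V_conditions(1)
  and last_unit_in_V = V_conditions(2)
  and ones_in_V = V_conditions(3)
  and V_subset_cube01 = V_conditions(4)
  and last_first_notin_V = V_conditions(5)
  and ones_but_first_notin_V = V_conditions(6)

lemma vec_of_set_in_V: "last_coord \<notin> S \<Longrightarrow> vec_of_set S \<in> V"
  using cube_layer_0_subset_V by auto

lemma vertex_coord: "v \<in> V \<Longrightarrow> v $ i = 0 \<or> v $ i = 1"
  using V_subset_cube01 cube01_coord by blast

lemma finite_V: "finite V"
  using V_subset_cube01 finite_cube01 by (rule finite_subset)

lemma polytope_PV: "polytope PV"
  unfolding polytope_def using finite_V by blast

lemma compact_PV: "compact PV"
  using polytope_PV by (rule polytope_imp_compact)

lemma PV_subset_cbox: "PV \<subseteq> cbox 0 1"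
  by (rule hull_minimal) (use V_subset_cube01 cube01_subset_cbox in auto)

lemma coord_bounds: "x \<in> PV \<Longrightarrow> 0 \<le> x $ i \<and> x $ i \<le> 1"
  using PV_subset_cbox by (auto simp: mem_box_cart subset_iff)

lemma extreme_point_iff: "v extreme_point_of PV \<longleftrightarrow> v \<in> V"
  using V_subset_cube01 by (rule extreme_point_of_convex_hull_cube01)

definition coord_face :: "'n \<Rightarrow> real \<Rightarrow> (real, 'n) vec set" where
  "coord_face i c = PV \<inter> {x. x $ i = c}"

abbreviation base :: "(real, 'n) vec set" where
  "base \<equiv> coord_face last_coord 0"

definition base_face :: "'n \<Rightarrow> real \<Rightarrow> (real, 'n) vec set" where
  "base_face i c = base \<inter> coord_face i c"

lemma coord_face_face: "c = 0 \<or> c = 1 \<Longrightarrow> coord_face i c face_of PV"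
  unfolding coord_face_def using PV_subset_cbox by (intro face_of_coord_hyperplane) auto

lemma base_face_face: "c = 0 \<or> c = 1 \<Longrightarrow> base_face i c face_of PV"
  unfolding base_face_def using coord_face_face by (intro face_of_Int) auto

lemma vertex_in_coord_face_iff: "v \<in> V \<Longrightarrow> v \<in> coord_face i c \<longleftrightarrow> v $ i = c"
  by (auto simp: coord_face_def hull_inc)

lemma vertex_in_base_face_iff:
  "v \<in> V \<Longrightarrow> v \<in> base_face i c \<longleftrightarrow> v $ last_coord = 0 \<and> v $ i = c"
  by (simp add: base_face_def vertex_in_coord_face_iff)

lemma base_Int_V: "base \<inter> V = cube_layer 0"
  using cube_layer_0_subset_V V_subset_cube01 by (auto simp: vertex_in_coord_face_iff cube_layer_def)

lemma base_ne_PV: "base \<noteq> PV"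
  using last_unit_in_V vertex_in_coord_face_iff[of "vec_of_set {last_coord}"] hull_inc[of _ V] by force

lemma aff_dim_PV: "aff_dim PV = int CARD('n)"
proof -
  have "(0 :: (real, 'n) vec) \<in> V"
    using vec_of_set_in_V[of "{}"] by simp
  then have "affine hull V = span V"
    by (rule affine_hull_span_0[OF hull_inc])
  moreover have "Basis \<subseteq> V"
  proof
    fix x :: "(real, 'n) vec" assume "x \<in> Basis"
    then obtain i where "x = vec_of_set {i}"
      by (auto simp: Basis_vec_def vec_eq_iff axis_def)
    then show "x \<in> V"
      using last_unit_in_V vec_of_set_in_V[of "{i}"] by (cases "i = last_coord") auto
  qed
  then have "span Basis \<subseteq> span V"
    by (rule span_mono)
  ultimately have "affine hull V = UNIV"
    by (auto simp: span_Basis)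
  then show ?thesis
    by (simp add: aff_dim_convex_hull aff_dim_eq_full[symmetric])
qed

lemma base_face_subset_base: "base_face i c \<subseteq> base"
  by (simp add: base_face_def)

lemma base_face_subset_coord_face: "base_face i c \<subseteq> coord_face i c"
  by (simp add: base_face_def)

lemma base_face_ne_base:
  assumes "i \<noteq> last_coord" "c = 0 \<or> c = 1"
  shows "base_face i c \<noteq> base"
proof -
  define v :: "(real, 'n) vec" where "v = vec_of_set (if c = 0 then {i} else {})"
  have "v \<in> V"
    unfolding v_def using assms(1) by (intro vec_of_set_in_V) auto
  moreover have "v $ i \<noteq> c" "v $ last_coord = 0"
    using assms by (auto simp: v_def)
  ultimately show ?thesis
    by (metis vertex_in_base_face_iff vertex_in_coord_face_iff)
qed

lemma coord_face_not_subset_base: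
  assumes "c = 0 \<or> c = 1" "i \<noteq> last_coord"
  shows "\<not> coord_face i c \<subseteq> base"
proof -
  define v :: "(real, 'n) vec" where "v = vec_of_set (if c = 0 then {last_coord} else UNIV)"
  have "v \<in> V"
    using last_unit_in_V ones_in_V by (simp add: v_def)
  moreover have "v $ i = c" "v $ last_coord = 1"
    using assms by (auto simp: v_def)
  ultimately show ?thesis
    by (metis subsetD vertex_in_coord_face_iff zero_neq_one)
qed

lemma coord_face_ne_PV:
  assumes "i \<noteq> last_coord" "c = 0 \<or> c = 1"
  shows "coord_face i c \<noteq> PV"
proof -
  define v :: "(real, 'n) vec" where "v = vec_of_set (if c = 0 then {i} else {})"
  have "v \<in> V"
    unfolding v_def using assms(1) by (intro vec_of_set_in_V) auto
  moreover have "v $ i \<noteq> c"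
    using assms by (auto simp: v_def)
  ultimately show ?thesis
    using vertex_in_coord_face_iff hull_inc[of v V] by blast
qed

lemma exposed_face_containing_base_face:
  assumes i: "i \<noteq> last_coord" and c: "c = 0 \<or> c = 1"
    and le: "\<forall>x \<in> PV. a \<bullet> x \<le> b" and sub: "base_face i c \<subseteq> PV \<inter> {x. a \<bullet> x = b}"
  shows "PV \<inter> {x. a \<bullet> x = b} =
    PV \<inter> {x. (a $ i = 0 \<or> x $ i = c) \<and> (a $ last_coord = 0 \<or> x $ last_coord = 0)}"
proof -
  have vertex_le: "a \<bullet> v \<le> b" if "v \<in> V" for v
    by (rule bspec[OF le hull_inc[OF that]])
  have on_subcube: "a \<bullet> u = b" if "u \<in> cube01" "u $ last_coord = 0" "u $ i = c" for u
  proof -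
    have "u \<in> V"
      using that cube_layer_0_subset_V by (auto simp: cube_layer_def)
    then have "u \<in> base_face i c"
      using that by (simp add: vertex_in_base_face_iff)
    then show ?thesis
      using sub by auto
  qed
  let ?l = "last_coord :: 'n"
  have a_inner: "a \<bullet> x = a $ i * x $ i + a $ ?l * x $ ?l" for x
    by (rule inner_const_on_subcube(1)[OF i c on_subcube])
  have b_eq: "b = a $ i * c"
    by (rule inner_const_on_subcube(2)[OF i c on_subcube])
  have inner_vec: "a \<bullet> vec_of_set S = (if i \<in> S then a $ i else 0) + (if ?l \<in> S then a $ ?l else 0)" for S
    by (rule inner_vec_of_set_two_coords[OF a_inner])
  have v_i: "a $ i \<le> a $ i * c"
    using vertex_le[OF vec_of_set_in_V[of "{i}"]] i by (simp add: inner_vec b_eq)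
  have v_0: "0 \<le> a $ i * c"
    using vertex_le[OF vec_of_set_in_V[of "{}"]] by (simp add: inner_vec b_eq)
  have v_l: "a $ ?l \<le> a $ i * c"
    using vertex_le[OF last_unit_in_V] i by (simp add: inner_vec b_eq)
  have v_1: "a $ i + a $ ?l \<le> a $ i * c"
    using vertex_le[OF ones_in_V] by (simp add: inner_vec b_eq)
  have al: "a $ ?l \<le> 0"
    using c v_l v_1 by (elim disjE) simp_all
  have ai: "(c = 0 \<and> a $ i \<le> 0) \<or> (c = 1 \<and> a $ i \<ge> 0)"
    using c v_i v_0 by (elim disjE) simp_all
  have key: "a \<bullet> x = b \<longleftrightarrow> (a $ i = 0 \<or> x $ i = c) \<and> (a $ ?l = 0 \<or> x $ ?l = 0)"
    if "x \<in> PV" for x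
  proof -
    have "a $ i * (x $ i - c) \<le> 0"
      using ai coord_bounds[OF that, of i]
      by (elim disjE conjE) (simp_all add: mult_nonpos_nonneg mult_nonneg_nonpos)
    moreover have "a $ ?l * x $ ?l \<le> 0"
      using al coord_bounds[OF that, of ?l] by (simp add: mult_nonpos_nonneg)
    moreover have "a \<bullet> x - b = a $ i * (x $ i - c) + a $ ?l * x $ ?l"
      unfolding a_inner b_eq by (simp add: algebra_simps)
    ultimately have "a \<bullet> x = b \<longleftrightarrow> a $ i * (x $ i - c) = 0 \<and> a $ ?l * x $ ?l = 0"
      by arith
    then show ?thesis
      by simp
  qed
  show ?thesis
    using key by blast
qed

lemma faces_containing_base_face:
  assumes i: "i \<noteq> last_coord" and c: "c = 0 \<or> c = 1"
    and H: "H face_of PV" and sub: "base_face i c \<subseteq> H"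
  shows "H = base_face i c \<or> H = base \<or> H = coord_face i c \<or> H = PV"
proof -
  let ?l = "last_coord :: 'n"
  obtain a b where le: "\<forall>x \<in> PV. a \<bullet> x \<le> b" and H_eq: "H = PV \<inter> {x. a \<bullet> x = b}"
    by (rule face_of_polytope_exposed[OF polytope_PV H])
  have H_eq': "H = PV \<inter> {x. (a $ i = 0 \<or> x $ i = c) \<and> (a $ ?l = 0 \<or> x $ ?l = 0)}"
    using exposed_face_containing_base_face[OF i c le] sub H_eq by simp
  show ?thesis
  proof (cases "a $ i = 0"; cases "a $ ?l = 0")
    assume "a $ i = 0" "a $ ?l = 0"
    then show ?thesis
      using H_eq' by simp
  next
    assume "a $ i = 0" "a $ ?l \<noteq> 0"
    then show ?thesis
      using H_eq' by (simp add: coord_face_def)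
  next
    assume "a $ i \<noteq> 0" "a $ ?l = 0"
    then show ?thesis
      using H_eq' by (simp add: coord_face_def)
  next
    assume "a $ i \<noteq> 0" "a $ ?l \<noteq> 0"
    then have "H = base_face i c"
      using H_eq' by (auto simp: base_face_def coord_face_def)
    then show ?thesis
      by simp
  qed
qed

lemma face_below_base_nonvertical:
  assumes le: "\<forall>x \<in> PV. a \<bullet> x \<le> b" and H: "H face_of PV" and H_eq: "H = PV \<inter> {x. a \<bullet> x = b}"
    and sub: "H \<subseteq> base" and j: "j \<noteq> last_coord" "a $ j \<noteq> 0"
    and c: "c = (if a $ j > 0 then 1 else 0)"
  shows "H \<subseteq> base_face j c"
proof -
  let ?l = "last_coord :: 'n"
  have "H \<inter> V \<subseteq> {x. x $ ?l = 0} \<inter> {x. x $ j = c}"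
  proof
    fix v assume v: "v \<in> H \<inter> V"
    then have vl: "v $ ?l = 0"
      using sub by (auto simp: coord_face_def)
    have "switch_map j v \<in> cube_layer 0"
      using v vl j(1) V_subset_cube01 by (auto simp: cube_layer_def switch_map_in_cube01)
    then have "a \<bullet> switch_map j v \<le> b"
      using le cube_layer_0_subset_V hull_inc[of "switch_map j v" V] by blast
    moreover have "a \<bullet> v = b"
      using v H_eq by blast
    ultimately have "(1 - 2 * v $ j) * a $ j \<le> 0"
      by (simp add: inner_switch_map)
    then have "v $ j = c"
      using vertex_coord[of v j] v j(2) by (auto simp: c)
    with vl show "v \<in> {x. x $ ?l = 0} \<inter> {x. x $ j = c}"
      by simp
  qed
  moreover have "convex ({x. x $ ?l = 0} \<inter> {x :: (real, 'n) vec. x $ j = c})"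
    by (intro convex_Int convex_coord_hyperplane)
  ultimately have "convex hull (H \<inter> V) \<subseteq> {x. x $ ?l = 0} \<inter> {x. x $ j = c}"
    by (intro hull_minimal)
  then show "H \<subseteq> base_face j c"
    using face_of_convex_hull_eq_hull_Int[OF finite_imp_compact[OF finite_V] H]
      face_of_imp_subset[OF H]
    by (auto simp: base_face_def coord_face_def)
qed

lemma face_below_base:
  assumes H: "H face_of PV" "H \<subseteq> base" "H \<noteq> base"
  obtains j c where "j \<noteq> last_coord" "c = 0 \<or> c = 1" "H \<subseteq> base_face j c"
proof -
  let ?l = "last_coord :: 'n"
  obtain a b where le: "\<forall>x \<in> PV. a \<bullet> x \<le> b" and H_eq: "H = PV \<inter> {x. a \<bullet> x = b}"
    by (rule face_of_polytope_exposed[OF polytope_PV H(1)])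
  show ?thesis
  proof (cases "\<forall>j. j \<noteq> ?l \<longrightarrow> a $ j = 0")
    case True
    then have inner: "a \<bullet> x = a $ ?l * x $ ?l" for x
      using inner_vec_eq_sum_support[of "{?l}" a x] by auto
    have "H = {}"
    proof (rule ccontr)
      assume "H \<noteq> {}"
      then obtain y where "y \<in> H"
        by blast
      then have "b = 0"
        using H(2) H_eq inner by (auto simp: coord_face_def)
      then have "base \<subseteq> H"
        using H_eq inner by (auto simp: coord_face_def)
      with H(2,3) show False
        by blast
    qed
    then show ?thesis
      using that[of first_coord 0] first_ne_last by simp
  next
    case False
    then obtain j where j: "j \<noteq> ?l" "a $ j \<noteq> 0"
      by blast
    moreover define c where "c = (if a $ j > 0 then 1 else (0::real))"
    ultimately have "H \<subseteq> base_face j c"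
      using face_below_base_nonvertical[OF le H(1) H_eq H(2)] by simp
    moreover have "c = 0 \<or> c = 1"
      by (simp add: c_def)
    ultimately show ?thesis
      using that j(1) by blast
  qed
qed

lemma exposed_face_covers_layers:
  assumes le: "\<forall>x \<in> PV. a \<bullet> x \<le> b" and i: "i \<noteq> last_coord" "a $ i \<noteq> 0"
    and many: "card (cube_layer 0 :: (real, 'n) vec set) \<le> card (V \<inter> {x. a \<bullet> x = b})"
    and x: "x \<in> cube_layer c" "c = 0 \<or> c = 1"
  shows "a \<bullet> x = b \<and> x \<in> V \<or> a \<bullet> switch_map i x = b \<and> switch_map i x \<in> V"
proof -
  define W where "W = V \<inter> {x. a \<bullet> x = b}"
  define s where "s = switch_map i"
  have s_W: "s w \<notin> W" if "w \<in> W" for w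
  proof
    assume "s w \<in> W"
    then have "(1 - 2 * w $ i) * a $ i = 0"
      using that by (simp add: W_def s_def inner_switch_map)
    moreover have "w $ i = 0 \<or> w $ i = 1"
      using that vertex_coord by (simp add: W_def)
    ultimately show False
      using i(2) by auto
  qed
  have s_layer: "s y \<in> cube_layer c" if "y \<in> cube_layer c" for y c
    using that i(1) by (simp add: s_def cube_layer_def switch_map_in_cube01)
  have W_layers: "W = (W \<inter> cube_layer 0) \<union> (W \<inter> cube_layer 1)"
    using V_subset_cube01 cube01_eq_layers by (auto simp: W_def)
  have "card W = card ((W \<inter> cube_layer 0) \<union> (W \<inter> cube_layer 1))"
    using W_layers by (rule arg_cong)
  also have "\<dots> = card (W \<inter> cube_layer 0) + card (W \<inter> cube_layer 1)"
    using finite_V by (intro card_Un_disjoint) (auto simp: W_def cube_layer_def)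
  finally have card_W: "card W = card (W \<inter> cube_layer 0) + card (W \<inter> cube_layer 1)" .
  have s_image: "s ` (W \<inter> cube_layer c) \<subseteq> cube_layer c" for c
    using s_layer by blast
  have s_disjoint: "(W \<inter> cube_layer c) \<inter> s ` (W \<inter> cube_layer c) = {}" for c
    using s_W by blast
  note half = card_disjoint_inj_image(1)[OF _ finite_cube_layer Int_lower2 s_image s_disjoint]
    and cover = card_disjoint_inj_image(2)[OF _ finite_cube_layer Int_lower2 s_image s_disjoint]
  have "inj s"
    by (simp add: s_def inj_switch_map)
  have "card (cube_layer 0 :: (real, 'n) vec set) \<le> card W"
    using many by (simp add: W_def)
  moreover have "2 * card (W \<inter> cube_layer 1) \<le> card (cube_layer 0 :: (real, 'n) vec set)"
    using half[OF \<open>inj s\<close>, of 1] by (simp add: card_cube_layer_1)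
  ultimately have "2 * card (W \<inter> cube_layer 0) = card (cube_layer 0 :: (real, 'n) vec set)"
    "2 * card (W \<inter> cube_layer 1) = card (cube_layer 0 :: (real, 'n) vec set)"
    using half[OF \<open>inj s\<close>, of 0] card_W by linarith+
  then have "2 * card (W \<inter> cube_layer c) = card (cube_layer c :: (real, 'n) vec set)"
    using x(2) card_cube_layer_1[where 'n = 'n] by auto
  then have "x \<in> W \<union> s ` W"
    using cover[OF \<open>inj s\<close>] x(1) by blast
  then have "x \<in> W \<or> s x \<in> W"
    by (auto simp: s_def)
  then show ?thesis
    by (auto simp: W_def s_def)
qed

lemma card_exposed_face_vertices_lt:
  assumes le: "\<forall>x \<in> PV. a \<bullet> x \<le> b" and i: "i \<noteq> last_coord" "a $ i \<noteq> 0"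
  shows "card (V \<inter> {x. a \<bullet> x = b}) < card (cube_layer 0 :: (real, 'n) vec set)"
proof (rule ccontr)
  let ?l = "last_coord :: 'n" and ?f = "first_coord :: 'n"
  assume "\<not> ?thesis"
  then have many: "card (cube_layer 0 :: (real, 'n) vec set) \<le> card (V \<inter> {x. a \<bullet> x = b})"
    by simp
  note covers = exposed_face_covers_layers[OF le i many]
  have vertex_le: "a \<bullet> v \<le> b" if "v \<in> V" for v
    by (rule bspec[OF le hull_inc[OF that]])
  define c where "c = (if a $ i > 0 then 1 else (0::real))"
  \<comment> \<open>Each bottom vertex with x_i = c lies on the face, since switching it strictly decreases
      a \<bullet> x, so its switch cannot lie on the face instead.\<close>
  have on_subcube: "a \<bullet> u = b" if "u \<in> cube01" "u $ ?l = 0" "u $ i = c" for u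
  proof (rule ccontr)
    assume "a \<bullet> u \<noteq> b"
    moreover have u: "u \<in> cube_layer 0"
      using that by (simp add: cube_layer_def)
    ultimately have "a \<bullet> switch_map i u = b"
      using covers[OF u] by auto
    then have "a \<bullet> u = b + (2 * c - 1) * a $ i"
      using inner_switch_map[of a i "switch_map i u"] that(3) by simp
    moreover have "0 < (2 * c - 1) * a $ i"
      using i(2) by (auto simp: c_def)
    moreover have "a \<bullet> u \<le> b"
      using vertex_le cube_layer_0_subset_V u by blast
    ultimately show False
      by linarith
  qed
  have c01: "c = 0 \<or> c = 1"
    by (simp add: c_def)
  have a_inner: "a \<bullet> x = a $ i * x $ i + a $ ?l * x $ ?l" for x
    by (rule inner_const_on_subcube(1)[OF i(1) c01 on_subcube])
  have top: "a $ i * (1 - y $ i) + a $ ?l = b" if "y \<in> cube_layer 1" "y \<notin> V" for y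
  proof -
    have "a \<bullet> switch_map i y = b"
      using covers[OF that(1)] that(2) by auto
    then show ?thesis
      using that(1) i(1) by (simp add: a_inner cube_layer_def)
  qed
  define p q where "p = vec_of_set {?l, ?f} $ i" and "q = vec_of_set (- {?f}) $ i"
  have "a $ i * (1 - p) + a $ ?l = b"
    unfolding p_def by (rule top) (simp_all add: last_first_notin_V)
  moreover have "a $ i * (1 - q) + a $ ?l = b"
    unfolding q_def using first_ne_last by (intro top) (simp_all add: ones_but_first_notin_V)
  moreover have "a $ i * (q - p) = a $ i * (1 - p) - a $ i * (1 - q)"
    by (simp add: algebra_simps)
  ultimately have "a $ i * (q - p) = 0"
    by linarith
  moreover have "q - p \<noteq> 0"
    using i(1) by (auto simp: p_def q_def)
  ultimately show False
    using i(2) by simp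
qed

lemma vertical_face_vertices_in_top_layer:
  assumes le: "\<forall>x \<in> PV. a \<bullet> x \<le> b" and vertical: "\<forall>j. j \<noteq> last_coord \<longrightarrow> a $ j = 0"
    and ne: "PV \<inter> {x. a \<bullet> x = b} \<noteq> PV" "PV \<inter> {x. a \<bullet> x = b} \<noteq> base"
  shows "V \<inter> {x. a \<bullet> x = b} \<subseteq> cube_layer 1"
proof
  let ?l = "last_coord :: 'n"
  have a_inner: "a \<bullet> x = a $ ?l * x $ ?l" for x
    using vertical inner_vec_eq_sum_support[of "{?l}" a x] by auto
  have "b \<noteq> 0"
  proof
    assume "b = 0"
    have "a \<bullet> vec_of_set {?l} \<le> b"
      using le hull_inc[OF last_unit_in_V] by blast
    then have "a $ ?l \<le> 0"
      using \<open>b = 0\<close> by (simp add: a_inner)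
    moreover have "a $ ?l \<noteq> 0"
      using ne(1) \<open>b = 0\<close> by (auto simp: a_inner)
    ultimately have "PV \<inter> {x. a \<bullet> x = b} = base"
      using \<open>b = 0\<close> by (auto simp: a_inner coord_face_def)
    with ne(2) show False ..
  qed
  fix v assume v: "v \<in> V \<inter> {x. a \<bullet> x = b}"
  then have "a $ ?l * v $ ?l = b"
    by (simp add: a_inner)
  with \<open>b \<noteq> 0\<close> have "v $ ?l = 1"
    using vertex_coord[of v ?l] v by auto
  then show "v \<in> cube_layer 1"
    using v V_subset_cube01 by (auto simp: cube_layer_def)
qed

lemma card_face_vertices_lt:
  assumes H: "H face_of PV" "H \<noteq> PV" "H \<noteq> base"
  shows "card (H \<inter> V) < card (cube_layer 0 :: (real, 'n) vec set)"
proof -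
  let ?l = "last_coord :: 'n" and ?f = "first_coord :: 'n"
  obtain a b where le: "\<forall>x \<in> PV. a \<bullet> x \<le> b" and H_eq: "H = PV \<inter> {x. a \<bullet> x = b}"
    by (rule face_of_polytope_exposed[OF polytope_PV H(1)])
  have HV: "H \<inter> V = V \<inter> {x. a \<bullet> x = b}"
    unfolding H_eq using hull_subset[of V convex] by blast
  show ?thesis
  proof (cases "\<forall>j. j \<noteq> ?l \<longrightarrow> a $ j = 0")
    case False
    then obtain i where "i \<noteq> ?l" "a $ i \<noteq> 0"
      by blast
    then show ?thesis
      unfolding HV by (rule card_exposed_face_vertices_lt[OF le])
  next
    case True
    then have "H \<inter> V \<subseteq> cube_layer 1 - {vec_of_set (- {?f})}"
      using vertical_face_vertices_in_top_layer[OF le] H(2,3) ones_but_first_notin_V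
      unfolding HV H_eq by blast
    then have "card (H \<inter> V) \<le> card (cube_layer 1 - {vec_of_set (- {?f})} :: (real, 'n) vec set)"
      by (intro card_mono) simp_all
    also have "\<dots> < card (cube_layer 1 :: (real, 'n) vec set)"
      using first_ne_last by (intro card_Diff1_less) simp_all
    finally show ?thesis
      by (simp add: card_cube_layer_1)
  qed
qed

end

section \<open>Combinatorial equivalence implies 0/1-equivalence on \<open>\<F>\<^sub>d\<close>\<close>

locale Fd_face_iso =
  P: Fd_member VP + Q: Fd_member VQ + face_lattice_iso "convex hull VP" "convex hull VQ" f
  for VP VQ :: "(real^'n::{finite,linorder}) set" and f
begin

lemma vertex_map_in: "v \<in> VP \<Longrightarrow> vertex_map v \<in> VQ"
  using image_singleton(2) by (simp add: P.extreme_point_iff Q.extreme_point_iff)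

lemma vertex_map_mem:
  "F face_of convex hull VP \<Longrightarrow> v \<in> VP \<Longrightarrow> vertex_map v \<in> f F \<longleftrightarrow> v \<in> F"
  by (simp add: vertex_map_mem_iff P.extreme_point_iff)

lemma vertex_map_image: "vertex_map ` VP = VQ"
  using bij_betw_vertex_map by (simp add: P.extreme_point_iff Q.extreme_point_iff bij_betw_def)

lemma card_image_vertices:
  "F face_of convex hull VP \<Longrightarrow> card (f F \<inter> VQ) = card (F \<inter> VP)"
  using card_extreme_points_image by (simp add: P.extreme_point_iff Q.extreme_point_iff Int_def)

lemma image_base: "f P.base = Q.base"
proof (rule ccontr)
  assume ne: "f P.base \<noteq> Q.base"
  have base: "P.base face_of convex hull VP"
    by (rule P.coord_face_face) simp
  have "f P.base \<noteq> f (convex hull VP)"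
    using eq_iff[OF base face_of_refl[OF convex_convex_hull]] P.base_ne_PV by simp
  then have "card (f P.base \<inter> VQ) < card (cube_layer 0 :: (real, 'n) vec set)"
    using Q.card_face_vertices_lt[OF face_of_image[OF base] _ ne] image_top by simp
  moreover have "card (f P.base \<inter> VQ) = card (cube_layer 0 :: (real, 'n) vec set)"
    using card_image_vertices[OF base] P.base_Int_V by simp
  ultimately show False
    by simp
qed

lemma image_base_face:
  assumes i: "i \<noteq> last_coord" and c: "c = 0 \<or> c = 1"
  obtains j c' where "j \<noteq> last_coord" "c' = 0 \<or> c' = 1" "f (P.base_face i c) = Q.base_face j c'"
proof -
  have G: "P.base_face i c face_of convex hull VP"
    using c by (rule P.base_face_face)
  have base: "P.base face_of convex hull VP"
    by (rule P.coord_face_face) simp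
  have "f (P.base_face i c) \<subseteq> Q.base"
    using subset_iff_image[OF G base] P.base_face_subset_base image_base by simp
  moreover have "f (P.base_face i c) \<noteq> Q.base"
    using eq_iff[OF G base] P.base_face_ne_base[OF i c] image_base by simp
  ultimately obtain j c' where j: "j \<noteq> last_coord" "c' = 0 \<or> c' = 1"
    and sub: "f (P.base_face i c) \<subseteq> Q.base_face j c'"
    using Q.face_below_base[OF face_of_image[OF G]] by metis
  obtain Y where Y: "Y face_of convex hull VP" "f Y = Q.base_face j c'"
    using obtain_preimage[OF Q.base_face_face[OF j(2)]] .
  have "P.base_face i c \<subseteq> Y"
    using subset_iff_image[OF G Y(1)] sub Y(2) by simp
  then have "Y = P.base_face i c \<or> Y = P.base \<or> Y = P.coord_face i c \<or> Y = convex hull VP"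
    by (rule P.faces_containing_base_face[OF i c Y(1)])
  moreover have "Y \<subseteq> P.base"
    using subset_iff_image[OF Y(1) base] Y(2) Q.base_face_subset_base image_base by simp
  moreover have "Y \<noteq> P.base"
    using Y(2) image_base Q.base_face_ne_base[OF j] by auto
  moreover have "\<not> convex hull VP \<subseteq> P.base"
    using P.base_ne_PV by (auto simp: P.coord_face_def)
  ultimately have "Y = P.base_face i c"
    using P.coord_face_not_subset_base[OF c i] by auto
  then show ?thesis
    using that j Y(2) by blast
qed

lemma image_coord_face:
  assumes i: "i \<noteq> last_coord" "c = 0 \<or> c = 1" and j: "j \<noteq> last_coord" "c' = 0 \<or> c' = 1"
    and G: "f (P.base_face i c) = Q.base_face j c'"
  shows "f (P.coord_face i c) = Q.coord_face j c'"
proof -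
  have F: "P.coord_face i c face_of convex hull VP"
    using i(2) by (rule P.coord_face_face)
  have G_face: "P.base_face i c face_of convex hull VP"
    using i(2) by (rule P.base_face_face)
  have base: "P.base face_of convex hull VP"
    by (rule P.coord_face_face) simp
  have "Q.base_face j c' \<subseteq> f (P.coord_face i c)"
    using subset_iff_image[OF G_face F] P.base_face_subset_coord_face G by simp
  then have "f (P.coord_face i c) = Q.base_face j c' \<or> f (P.coord_face i c) = Q.base \<or>
      f (P.coord_face i c) = Q.coord_face j c' \<or> f (P.coord_face i c) = convex hull VQ"
    by (rule Q.faces_containing_base_face[OF j face_of_image[OF F]])
  moreover have "f (P.coord_face i c) \<noteq> Q.base_face j c'"
  proof
    assume "f (P.coord_face i c) = Q.base_face j c'"
    then have "P.coord_face i c = P.base_face i c"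
      using eq_iff[OF F G_face] G by simp
    then show False
      using P.coord_face_not_subset_base[OF i(2,1)] P.base_face_subset_base by simp
  qed
  moreover have "f (P.coord_face i c) \<noteq> Q.base"
    using eq_iff[OF F base] image_base P.coord_face_not_subset_base[OF i(2,1)] by auto
  moreover have "f (P.coord_face i c) \<noteq> convex hull VQ"
    using eq_iff[OF F face_of_refl[OF convex_convex_hull]] image_top P.coord_face_ne_PV[OF i] by auto
  ultimately show ?thesis
    by blast
qed

lemma vertex_map_coord:
  assumes i: "i \<noteq> last_coord"
  obtains j t where "j \<noteq> last_coord"
    "\<forall>v \<in> VP. vertex_map v $ j = (if t then 1 - v $ i else v $ i)"
proof -
  have F0: "P.coord_face i 0 face_of convex hull VP"
    by (rule P.coord_face_face) simp
  obtain j c' where j: "j \<noteq> last_coord" "c' = 0 \<or> c' = 1"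
    and G: "f (P.base_face i 0) = Q.base_face j c'"
    using image_base_face[OF i, of 0] by auto
  have F: "f (P.coord_face i 0) = Q.coord_face j c'"
    using image_coord_face[OF i _ j G] by simp
  have "vertex_map v $ j = (if c' = 1 then 1 - v $ i else v $ i)" if v: "v \<in> VP" for v
  proof -
    have "vertex_map v $ j = c' \<longleftrightarrow> v $ i = 0"
      using vertex_map_mem[OF F0 v] F vertex_map_in[OF v]
      by (simp add: Q.vertex_in_coord_face_iff P.vertex_in_coord_face_iff v)
    then show ?thesis
      using j(2) P.vertex_coord[OF v, of i] Q.vertex_coord[OF vertex_map_in[OF v], of j] by auto
  qed
  then show ?thesis
    using that j(1) by blast
qed

lemma vertex_map_last:
  assumes v: "v \<in> VP"
  shows "vertex_map v $ last_coord = v $ last_coord"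
proof -
  have base: "P.base face_of convex hull VP"
    by (rule P.coord_face_face) simp
  have "vertex_map v $ last_coord = 0 \<longleftrightarrow> v $ last_coord = 0"
    using vertex_map_mem[OF base v] image_base vertex_map_in[OF v]
    by (simp add: Q.vertex_in_coord_face_iff P.vertex_in_coord_face_iff v)
  then show ?thesis
    using P.vertex_coord[OF v, of last_coord] Q.vertex_coord[OF vertex_map_in[OF v], of last_coord]
    by auto
qed

lemma vertex_map_coord_source_unique:
  assumes "i \<noteq> last_coord" "i' \<noteq> last_coord"
    and "\<forall>v \<in> VP. vertex_map v $ j = (if t then 1 - v $ i else v $ i)"
    and "\<forall>v \<in> VP. vertex_map v $ j = (if t' then 1 - v $ i' else v $ i')"
  shows "i = i'"
proof (rule ccontr)
  assume "i \<noteq> i'"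
  have "t = t'"
    using assms(3,4) P.vec_of_set_in_V[of "{}"] by (auto split: if_splits)
  then show False
    using assms P.vec_of_set_in_V[of "{i}"] \<open>i \<noteq> i'\<close> by (auto split: if_splits)
qed

lemma vertex_map_coord_choice:
  obtains \<sigma> \<tau> where "\<forall>i. i \<noteq> last_coord \<longrightarrow> \<sigma> i \<noteq> last_coord \<and>
    (\<forall>v \<in> VP. vertex_map v $ \<sigma> i = (if \<tau> i then 1 - v $ i else v $ i))"
proof -
  let ?l = "last_coord :: 'n"
  have "\<exists>jt. i \<noteq> ?l \<longrightarrow> fst jt \<noteq> ?l \<and>
      (\<forall>v \<in> VP. vertex_map v $ fst jt = (if snd jt then 1 - v $ i else v $ i))" for i
  proof (cases "i = ?l")
    case False
    then obtain j t where "j \<noteq> ?l" "\<forall>v \<in> VP. vertex_map v $ j = (if t then 1 - v $ i else v $ i)"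
      by (rule vertex_map_coord)
    then show ?thesis
      by (intro exI[of _ "(j, t)"]) simp
  qed simp
  then have "\<exists>st. \<forall>i. i \<noteq> ?l \<longrightarrow> fst (st i) \<noteq> ?l \<and>
      (\<forall>v \<in> VP. vertex_map v $ fst (st i) = (if snd (st i) then 1 - v $ i else v $ i))"
    by (rule choice[OF allI])
  then obtain st where "\<forall>i. i \<noteq> ?l \<longrightarrow> fst (st i) \<noteq> ?l \<and>
      (\<forall>v \<in> VP. vertex_map v $ fst (st i) = (if snd (st i) then 1 - v $ i else v $ i))"
    by (elim exE)
  then show ?thesis
    using that[of "fst \<circ> st" "snd \<circ> st"] by simp
qed

lemma exists_cube_sym: "\<exists>g \<in> cube_syms. g ` (convex hull VP) = convex hull VQ"
proof -
  let ?l = "last_coord :: 'n"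
  obtain \<sigma> \<tau> where st: "\<forall>i. i \<noteq> ?l \<longrightarrow> \<sigma> i \<noteq> ?l \<and>
      (\<forall>v \<in> VP. vertex_map v $ \<sigma> i = (if \<tau> i then 1 - v $ i else v $ i))"
    by (rule vertex_map_coord_choice)
  have \<sigma>: "\<sigma> i \<noteq> ?l" if "i \<noteq> ?l" for i
    using st that by simp
  have coord: "\<forall>v \<in> VP. vertex_map v $ \<sigma> i = (if \<tau> i then 1 - v $ i else v $ i)" if "i \<noteq> ?l" for i
    using st that by simp
  define \<pi> where "\<pi> k = (if k = ?l then ?l else \<sigma> k)" for k
  have "inj \<pi>"
  proof (rule injI)
    fix k k' assume eq: "\<pi> k = \<pi> k'"
    show "k = k'"
    proof (cases "k = ?l \<or> k' = ?l")
      case True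
      then show ?thesis
        using eq \<sigma>[of k] \<sigma>[of k'] by (auto simp: \<pi>_def split: if_splits)
    next
      case False
      then have "\<sigma> k' = \<sigma> k"
        using eq by (simp add: \<pi>_def)
      then show ?thesis
        using False coord[of k] coord[of k']
        by (intro vertex_map_coord_source_unique[of k k' "\<sigma> k" "\<tau> k" "\<tau> k'"]) simp_all
    qed
  qed
  moreover from this have "surj \<pi>"
    by (simp add: finite_UNIV_inj_surj)
  ultimately have \<pi>: "\<pi> permutes UNIV"
    by (intro bij_imp_permutes) (simp_all add: bij_def)
  obtain g where g: "g \<in> cube_syms"
    and g_coord: "\<forall>x k. g x $ \<pi> k = (if k \<in> {k. k \<noteq> ?l \<and> \<tau> k} then 1 - x $ k else x $ k)"
    by (rule cube_sym_permuting_coords[OF \<pi>])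
  have "g v = vertex_map v" if v: "v \<in> VP" for v
  proof -
    have eq: "g v $ \<pi> k = vertex_map v $ \<pi> k" for k
      using g_coord coord[of k] v vertex_map_last[OF v] by (simp add: \<pi>_def)
    show ?thesis
    proof (rule vec_eq_iff[THEN iffD2], rule allI)
      fix m
      obtain k where "m = \<pi> k"
        using permutes_surj[OF \<pi>] by (metis surjD)
      then show "g v $ m = vertex_map v $ m"
        using eq by simp
    qed
  qed
  then have "g ` VP = vertex_map ` VP"
    by (rule image_cong[OF refl])
  then have "g ` VP = VQ"
    by (simp only: vertex_map_image)
  moreover have "g ` (convex hull VP) = convex hull (g ` VP)"
    by (rule cube_sym_convex_hull[OF g])
  ultimately show ?thesis
    using g by auto
qed

end

lemma FdE:
  assumes "CARD('n::{finite,linorder}) \<ge> 3" "P \<in> (Fd :: (real^'n::{finite,linorder}) set set)"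
  obtains V where "Fd_member V" "P = convex hull V"
  using assms unfolding Fd_def Fd_member_def by blast

lemma comb_equivalent_imp_zo_equivalent:
  assumes "CARD('n::{finite,linorder}) \<ge> 3" "P \<in> (Fd :: (real^'n::{finite,linorder}) set set)" "Q \<in> Fd"
    and "comb_equivalent P Q"
  shows "zo_equivalent P Q"
proof -
  obtain VP where mP: "Fd_member VP" and P: "P = convex hull VP"
    using assms(1,2) by (rule FdE)
  obtain VQ where mQ: "Fd_member VQ" and Q: "Q = convex hull VQ"
    using assms(1,3) by (rule FdE)
  obtain f where bij: "bij_betw f {F. F face_of P} {G. G face_of Q}"
    and mono: "\<forall>F1 \<in> {F. F face_of P}. \<forall>F2 \<in> {F. F face_of P}. F1 \<subseteq> F2 \<longleftrightarrow> f F1 \<subseteq> f F2"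
    using assms(4) unfolding comb_equivalent_def by blast
  have "face_lattice_iso P Q f"
    unfolding face_lattice_iso_def P Q
    using Fd_member.compact_PV[OF mP] Fd_member.compact_PV[OF mQ] bij mono P Q by simp
  then interpret Fd_face_iso VP VQ f
    using mP mQ P Q by (simp add: Fd_face_iso_def)
  show ?thesis
    using exists_cube_sym P Q by (simp add: zo_equivalent_def)
qed

lemma zo_equivalent_iff_comb_equivalent:
  assumes "CARD('n::{finite,linorder}) \<ge> 3" "P \<in> (Fd :: (real^'n::{finite,linorder}) set set)" "Q \<in> Fd"
  shows "zo_equivalent P Q \<longleftrightarrow> comb_equivalent P Q"
  using comb_equivalent_imp_zo_equivalent[OF assms] comb_equivalent_cube_sym_image
  by (auto simp: zo_equivalent_def)

section \<open>Counting combinatorial types\<close>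

lemma cube_map_between_Fd_fixes_last_coord:
  fixes V W :: "(real^'n::{finite,linorder}) set"
  assumes V: "Fd_member V" and W: "Fd_member W" and p: "p permutes UNIV"
    and image: "cube_map p S ` (convex hull V) = convex hull W"
  shows "p last_coord = last_coord \<and> last_coord \<notin> S"
proof (rule ccontr)
  let ?l = "last_coord :: 'n" and ?f = "first_coord :: 'n" and ?g = "cube_map p S"
  assume moved: "\<not> (p ?l = ?l \<and> ?l \<notin> S)"
  have image_V: "?g ` V = W"
  proof (rule inj_onD[OF inj_on_convex_hull_cube01])
    show "convex hull (?g ` V) = convex hull W"
      using image cube_sym_convex_hull[OF cube_map_in_cube_syms[OF p]] by simp
    show "?g ` V \<in> {V. V \<subseteq> cube01}"
      using Fd_member.V_subset_cube01[OF V] cube_map_in_cube01 by blast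
    show "W \<in> {V. V \<subseteq> cube01}"
      using Fd_member.V_subset_cube01[OF W] by simp
  qed
  \<comment> \<open>Otherwise one of the vertices e_d + e_1, 1 - e_1 missing from W is the image of a
      vertex in the bottom layer of V.\<close>
  define k0 where "k0 = inv p ?l"
  have pk0: "p k0 = ?l"
    unfolding k0_def by (rule permutes_inverses(1)[OF p])
  define target where "target = (if k0 \<in> S then 1 else (0::real))"
  define y where "y = (if vec_of_set {?l, ?f} $ k0 = target then vec_of_set {?l, ?f} else vec_of_set (- {?f}))"
  have "y $ k0 = target"
  proof (cases "k0 = ?l")
    case True
    then have "k0 \<in> S"
      using moved pk0 by auto
    then show ?thesis
      using True by (simp add: y_def target_def)
  next
    case False
    then show ?thesis
      by (auto simp: y_def target_def)
  qed
  have "y \<notin> W"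
    using Fd_member.last_first_notin_V[OF W] Fd_member.ones_but_first_notin_V[OF W] by (simp add: y_def)
  define x where "x = (\<chi> m. if inv p m \<in> S then 1 - y $ inv p m else y $ inv p m)"
  have "?g x = y"
    by (simp add: vec_eq_iff x_def permutes_inverses(2)[OF p])
  moreover have "x \<in> cube_layer 0"
  proof -
    have "y $ inv p m = 0 \<or> y $ inv p m = 1" for m
      by (rule cube01_coord) (simp add: y_def)
    then have "x \<in> cube01"
      by (auto simp: cube01_def x_def)
    moreover have "x $ ?l = 0"
      using \<open>y $ k0 = target\<close> by (simp add: x_def k0_def[symmetric] target_def)
    ultimately show ?thesis
      by (simp add: cube_layer_def)
  qed
  then have "x \<in> V"
    using Fd_member.cube_layer_0_subset_V[OF V] by blast
  ultimately show False
    using image_V \<open>y \<notin> W\<close> by blast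
qed

lemma exists_pairwise_unrelated_subset:
  assumes "finite X" "finite G"
    and refl: "\<And>x. x \<in> X \<Longrightarrow> R x x" and sym: "\<And>x y. R x y \<Longrightarrow> R y x"
    and orbit: "\<And>x y. x \<in> X \<Longrightarrow> y \<in> X \<Longrightarrow> R x y \<Longrightarrow> y \<in> (\<lambda>g. act g x) ` G"
  shows "\<exists>S \<subseteq> X. pairwise (\<lambda>x y. \<not> R x y) S \<and> card X \<le> card S * card G"
proof -
  have "finite Y \<Longrightarrow> Y \<subseteq> X \<Longrightarrow> \<exists>S \<subseteq> Y. pairwise (\<lambda>x y. \<not> R x y) S \<and> card Y \<le> card S * card G"
    for Y
  proof (induction Y rule: finite_psubset_induct)
    case (psubset Y)
    show ?case
    proof (cases "Y = {}")
      case False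
      then obtain x where x: "x \<in> Y"
        by blast
      define N where "N = {y \<in> Y. R x y}"
      have "x \<in> N"
        using x psubset.prems refl by (auto simp: N_def)
      then have "Y - N \<subset> Y"
        by (auto simp: N_def)
      then obtain S where S: "S \<subseteq> Y - N" "pairwise (\<lambda>x y. \<not> R x y) S"
        and card_S: "card (Y - N) \<le> card S * card G"
        using psubset.IH psubset.prems by (meson Diff_subset finite_Diff order_trans psubset.hyps)
      have "N \<subseteq> (\<lambda>g. act g x) ` G"
      proof
        fix y assume "y \<in> N"
        then have "x \<in> X" "y \<in> X" "R x y"
          using x psubset.prems by (auto simp: N_def)
        then show "y \<in> (\<lambda>g. act g x) ` G"
          by (rule orbit)
      qed
      then have "card N \<le> card G"
        using assms(2) by (meson card_image_le card_mono finite_imageI order_trans)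
      moreover have "card Y = card N + card (Y - N)"
        using psubset.hyps by (simp add: N_def card_Diff_subset card_mono)
      moreover have "x \<notin> S"
        using S(1) \<open>x \<in> N\<close> by blast
      moreover have "finite S"
        using S(1) psubset.hyps by (meson finite_Diff finite_subset)
      ultimately have "card Y \<le> card (insert x S) * card G"
        using card_S by simp
      moreover have "pairwise (\<lambda>x y. \<not> R x y) (insert x S)"
        using S sym by (auto simp: pairwise_insert N_def)
      moreover have "insert x S \<subseteq> Y"
        using S(1) x by blast
      ultimately show ?thesis
        by blast
    qed simp
  qed
  then show ?thesis
    using assms(1) by blast
qed

lemma succ_le_two_pow_pred: "n \<ge> 3 \<Longrightarrow> n + 1 \<le> (2::nat) ^ (n - 1)"
proof (induction n rule: dec_induct)
  case (step m)
  then have "Suc m + 1 \<le> 2 * 2 ^ (m - 1)"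
    by simp
  also have "\<dots> = (2::nat) ^ (Suc m - 1)"
    using step(1) by (cases m) simp_all
  finally show ?case .
qed simp

lemma fact_mult_two_pow_lt: "n \<ge> 5 \<Longrightarrow> fact n * 2 ^ n < (2::nat) ^ (2 ^ (n - 1) - 4)"
proof (induction n rule: dec_induct)
  case base
  then show ?case
    by (simp add: fact_numeral)
next
  case (step m)
  have m: "m + 1 \<le> (2::nat) ^ (m - 1)"
    using succ_le_two_pow_pred step(1) by simp
  have two_pow_m: "(2::nat) ^ m = 2 * 2 ^ (m - 1)"
    using step(1) by (cases m) simp_all
  have "fact (Suc m) * 2 ^ Suc m = (2 * (m + 1)) * (fact m * 2 ^ m)"
    by (simp add: algebra_simps)
  also have "\<dots> < (2 * (m + 1)) * (2::nat) ^ (2 ^ (m - 1) - 4)"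
    using step.IH by (intro mult_strict_left_mono) simp_all
  also have "\<dots> \<le> 2 ^ (2 ^ (m - 1)) * (2::nat) ^ (2 ^ (m - 1) - 4)"
  proof (rule mult_right_mono)
    have "2 * (m + 1) \<le> (2::nat) ^ m"
      using m two_pow_m by simp
    also have "\<dots> \<le> 2 ^ (2 ^ (m - 1))"
      using m by (intro power_increasing) simp_all
    finally show "2 * (m + 1) \<le> (2::nat) ^ (2 ^ (m - 1))" .
  qed simp
  also have "\<dots> = 2 ^ (2 ^ (Suc m - 1) - 4)"
    using m step(1) two_pow_m by (simp add: power_add[symmetric])
  finally show ?case .
qed

lemma finite_Fd: "finite Fd"
proof -
  have "Fd_vertex_sets \<subseteq> Pow cube01"
    by (auto simp: Fd_vertex_sets_def)
  then show ?thesis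
    unfolding Fd_def by (rule finite_imageI[OF finite_subset]) simp
qed

lemma comb_equivalent_Fd_imp_orbit:
  assumes "CARD('n::{finite,linorder}) \<ge> 3" "P \<in> (Fd :: (real^'n::{finite,linorder}) set set)" "Q \<in> Fd"
    and "comb_equivalent P Q"
  obtains p S where "p permutes (UNIV - {last_coord})" "S \<subseteq> UNIV - {last_coord}" "Q = cube_map p S ` P"
proof -
  obtain g where g: "g \<in> cube_syms" "g ` P = Q"
    using comb_equivalent_imp_zo_equivalent[OF assms] by (auto simp: zo_equivalent_def)
  obtain p S where p: "p permutes UNIV" "g = cube_map p S"
    by (rule cube_syms_eq_cube_map[OF g(1)])
  obtain VP where mP: "Fd_member VP" and P: "P = convex hull VP"
    using assms(1,2) by (rule FdE)
  obtain VQ where mQ: "Fd_member VQ" and Q: "Q = convex hull VQ"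
    using assms(1,3) by (rule FdE)
  have "p last_coord = last_coord \<and> last_coord \<notin> S"
    using g(2) p(2) P Q by (intro cube_map_between_Fd_fixes_last_coord[OF mP mQ p(1)]) simp
  then have "p permutes (UNIV - {last_coord})" "S \<subseteq> UNIV - {last_coord}"
    using p(1) by (auto intro: permutes_superset)
  with g(2) p(2) show ?thesis
    using that by blast
qed

lemma class_count_bound:
  assumes "d \<ge> 6"
  shows "fact (d - 1) * 2 ^ (d - 1) * 2 ^ (2 ^ (d - 2)) < (2::nat) ^ (2 ^ (d - 1) - 4)"
proof -
  have "5 \<le> d - 1" "d - 1 - 1 = d - 2"
    using assms by simp_all
  then have less: "fact (d - 1) * 2 ^ (d - 1) < (2::nat) ^ (2 ^ (d - 2) - 4)"
    using fact_mult_two_pow_lt[of "d - 1"] by (simp only:)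
  have "d - 1 = Suc (d - 2)"
    using assms by simp
  then have "(2::nat) ^ (d - 1) = 2 * 2 ^ (d - 2)"
    by simp
  moreover have "(4::nat) \<le> 2 ^ (d - 2)"
    using power_increasing[of 2 "d - 2" "2::nat"] assms by simp
  ultimately have "(2::nat) ^ (d - 1) - 4 = 2 ^ (d - 2) - 4 + 2 ^ (d - 2)"
    by simp
  then have "(2::nat) ^ (2 ^ (d - 1) - 4) = 2 ^ (2 ^ (d - 2) - 4) * 2 ^ (2 ^ (d - 2))"
    by (simp add: power_add)
  with less show ?thesis
    by simp
qed

lemma many_comb_inequivalent:
  assumes "CARD('n::{finite,linorder}) \<ge> 6"
  shows "\<exists>S \<subseteq> (Fd :: (real^'n::{finite,linorder}) set set).
    card S > 2 ^ (2 ^ (CARD('n) - 2)) \<and> pairwise (\<lambda>P Q. \<not> comb_equivalent P Q) S"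
proof -
  let ?l = "last_coord :: 'n" and ?d = "CARD('n)"
  define G where "G = {p. p permutes (UNIV - {?l})} \<times> Pow (UNIV - {?l})"
  define act where "act g P = cube_map (fst g) (snd g) ` P" for g and P :: "(real, 'n) vec set"
  have d3: "?d \<ge> 3"
    using assms by simp
  have "finite G"
    by (simp add: G_def finite_permutations)
  then have "\<exists>S \<subseteq> (Fd :: (real, 'n) vec set set). pairwise (\<lambda>P Q. \<not> comb_equivalent P Q) S \<and>
      card (Fd :: (real, 'n) vec set set) \<le> card S * card G"
  proof (rule exists_pairwise_unrelated_subset[where act = act, OF finite_Fd])
    show "comb_equivalent P P" for P :: "(real, 'n) vec set"
      by (rule comb_equivalent_refl)
    show "comb_equivalent Q P" if "comb_equivalent P Q" for P Q :: "(real, 'n) vec set"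
      using that by (rule comb_equivalent_sym)
    show "Q \<in> (\<lambda>g. act g P) ` G" if "P \<in> Fd" "Q \<in> Fd" "comb_equivalent P Q" for P Q
      using d3 that
      by (rule comb_equivalent_Fd_imp_orbit) (force simp: G_def act_def)
  qed
  then obtain S :: "(real, 'n) vec set set" where S: "S \<subseteq> Fd" "pairwise (\<lambda>P Q. \<not> comb_equivalent P Q) S"
    and card_Fd_le: "card (Fd :: (real, 'n) vec set set) \<le> card S * card G"
    by blast
  have card_G: "card G = fact (?d - 1) * 2 ^ (?d - 1)"
    by (simp add: G_def card_cartesian_product card_permutations card_Pow card_Diff_singleton)
  have "card S > 2 ^ (2 ^ (?d - 2))"
  proof (rule ccontr)
    assume "\<not> ?thesis"
    then have "card S * card G \<le> 2 ^ (2 ^ (?d - 2)) * card G"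
      by simp
    also have "\<dots> < 2 ^ (2 ^ (?d - 1) - 4)"
      using class_count_bound[OF assms] by (simp add: card_G mult.commute)
    finally show False
      using card_Fd_le card_Fd[OF d3] by simp
  qed
  with S show ?thesis
    by blast
qed

theorem mainTheorem3:
  assumes "CARD('n::{finite,linorder}) \<ge> 3"
  shows "card (Fd :: (real^'n::{finite,linorder}) set set) = 2 ^ (2 ^ (CARD('n::{finite,linorder}) - 1) - 4)
    \<and> (\<forall>P \<in> (Fd :: (real^'n::{finite,linorder}) set set). aff_dim P = int CARD('n::{finite,linorder}))
    \<and> (\<forall>P \<in> (Fd :: (real^'n::{finite,linorder}) set set). \<forall>Q \<in> Fd. zo_equivalent P Q \<longleftrightarrow> comb_equivalent P Q)
    \<and> (CARD('n::{finite,linorder}) \<ge> 6 \<longrightarrow> (\<exists>S \<subseteq> (Fd :: (real^'n::{finite,linorder}) set set).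
          card S > 2 ^ (2 ^ (CARD('n::{finite,linorder}) - 2)) \<and> pairwise (\<lambda>P Q. \<not> comb_equivalent P Q) S))"
proof (intro conjI ballI impI)
  show "card (Fd :: (real, 'n) vec set set) = 2 ^ (2 ^ (CARD('n) - 1) - 4)"
    using assms by (rule card_Fd)
  show "aff_dim P = int CARD('n)" if P: "P \<in> (Fd :: (real, 'n) vec set set)" for P
  proof -
    obtain V where "Fd_member V" "P = convex hull V"
      using assms P by (rule FdE)
    then show ?thesis
      by (simp add: Fd_member.aff_dim_PV)
  qed
  show "zo_equivalent P Q \<longleftrightarrow> comb_equivalent P Q" if "P \<in> (Fd :: (real, 'n) vec set set)" "Q \<in> Fd" for P Q
    using assms that by (rule zo_equivalent_iff_comb_equivalent)
  show "\<exists>S \<subseteq> (Fd :: (real, 'n) vec set set). card S > 2 ^ (2 ^ (CARD('n) - 2)) \<and>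
      pairwise (\<lambda>P Q. \<not> comb_equivalent P Q) S" if "CARD('n) \<ge> 6"
    using that by (rule many_comb_inequivalent)
qed

end
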